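(* Let $m$ be a positive integer and $n$ an integer with $\frac{3^{m-1}+1}{2}\le n\le\frac{3^m-1}{2}$ (so feasible partitions of $n$ have $m$ parts). (a) If $\frac{3^{m-1}+1}{2}\le n\le \frac{3^{m-1}+1}{2}+3^{m-2}$, then the smallest and largest values of $R_{m-1}$ over all feasible partitions of $n$ are $\left\lceil\frac{n-1}{3}\right\rceil$ and $\left\lfloor\frac{2n+3^{m-2}-1}{4}\right\rfloor$, respectively; that is, the range of $R_{m-1}$ is $\left\lceil\frac{n-1}{3}\right\rceil\le R_{m-1}\le\left\lfloor\frac{2n+3^{m-2}-1}{4}\right\rfloor$. (b) If $\frac{3^{m-1}+1}{2}+3^{m-2}+1\le n\le\frac{3^m-1}{2}$, then the range of $R_{m-1}$ over all feasible partitions of $n$ is $\left\lceil\frac{n-1}{3}\right\rceil\le R_{m-1}\le\frac{3^{m-1}-1}{2}$, with both bounds attained.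
   Context: A weighing partition of a positive integer $n$ is a multiset of positive integers summing to $n$ such that every integer $\ell$ with $1\le\ell\le n$ is a sum $\sum_j u_jw_j$ with $u_j\in\{-1,0,1\}$. A feasible partition of $n$ is a weighing partition of $n$ whose number of parts $m$ is minimal among all weighing partitions of $n$, written $w_1\le\dots\le w_m$. For such a partition, $R_i=w_1+\dots+w_i$ with $R_0=0$; in particular $R_{m-1}=n-w_m$. *)

theory Defs
  imports Complex_Main "HOL-Library.Multiset"
begin

text \<open>A weighing partition of n: a multiset of positive integers summing to n such that
every l with 1 \<le> l \<le> n is a signed sum \<Sum> u_j w_j with u_j in {-1,0,1}.
Choosing the coefficients is the same as choosing disjoint sub-multisets A (u_j = 1)
and B (u_j = -1) of P, i.e. A + B \<subseteq># P.\<close>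
definition weighing_partition :: "nat \<Rightarrow> nat multiset \<Rightarrow> bool" where
  "weighing_partition n P \<longleftrightarrow>
     (\<forall>x\<in>#P. 0 < x) \<and> sum_mset P = n \<and>
     (\<forall>l\<in>{1..n}. \<exists>A B. A + B \<subseteq># P \<and> int l = int (sum_mset A) - int (sum_mset B))"

definition feasible_partition :: "nat \<Rightarrow> nat multiset \<Rightarrow> bool" where
  "feasible_partition n P \<longleftrightarrow> weighing_partition n P \<and>
     (\<forall>Q. weighing_partition n Q \<longrightarrow> size P \<le> size Q)"

text \<open>R_{m-1} = w_1 + ... + w_{m-1} = n - w_m, where w_m is the largest part.\<close>
definition R_last :: "nat \<Rightarrow> nat multiset \<Rightarrow> nat" where
  "R_last n P = n - Max_mset P"

end

theory Submission
  imports Defs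
begin

text \<open>A multiset of positive parts is a weighing partition of its sum exactly when every part x
  is at most 2R + 1, R being the total of the parts below x. Removing the largest part w_m and then
  the next one gives n \<le> 3R_{m-1} + 1, 2R_{m-1} + 1 \<le> 3^{m-1} and, as w_{m-1} \<le> w_m and
  2R_{m-2} + 1 \<le> 3^{m-2}, also 4R_{m-1} + 1 \<le> 2n + 3^{m-2}. Conversely every sum R with
  k \<le> R \<le> (3^k - 1)/2 is realised by k parts satisfying the criterion; adding one resp. two large
  parts on top realises R_{m-1} = \<lceil>(n-1)/3\<rceil> resp. the smaller of the two upper bounds.\<close>

lemma sum_mset_mono_subset:
  fixes A B :: "'a::canonically_ordered_monoid_add multiset"
  assumes "A \<subseteq># B"
  shows "sum_mset A \<le> sum_mset B"
  using assms by (metis le_iff_add mset_subset_eq_exists_conv sum_mset.union)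

lemma member_le_sum_mset:
  fixes M :: "'a::canonically_ordered_monoid_add multiset"
  assumes "x \<in># M"
  shows "x \<le> sum_mset M"
  using sum_mset_mono_subset[of "{#x#}" M] assms by simp

lemma six_mult_le_three_power: "6 * k \<le> (3::nat) ^ k + 3"
proof (induction k)
  case (Suc k)
  then show ?case by (cases k) auto
qed simp

text \<open>The condition w_i \<le> 2R_{i-1} + 1 on the sorted parts, without sorting: among equal parts
  only the first one is constrained, hence the strict y < x.\<close>
definition weighing_criterion :: "nat multiset \<Rightarrow> bool" where
  "weighing_criterion P \<longleftrightarrow> (\<forall>x\<in>#P. 0 < x \<and> x \<le> 2 * sum_mset {#y \<in># P. y < x#} + 1)"

lemma weighing_criterion_add_mset_Max:
  assumes "\<forall>y\<in>#P. y \<le> x"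
  shows "weighing_criterion (add_mset x P) \<longleftrightarrow>
           weighing_criterion P \<and> 0 < x \<and> x \<le> 2 * sum_mset P + 1"
proof -
  have below: "{#y \<in># add_mset x P. y < z#} = {#y \<in># P. y < z#}" if "z \<le> x" for z
    using that by simp
  have "sum_mset {#y \<in># P. y < x#} \<le> sum_mset P"
    by (rule sum_mset_mono_subset) simp
  moreover have "{#y \<in># P. y < x#} = P" if "x \<notin># P"
    using assms that by (auto simp: filter_mset_eq_conv order.strict_iff_order)
  ultimately show ?thesis
    using assms by (auto simp: weighing_criterion_def below)
qed

lemma Max_mset_add_mset_upper:
  fixes x :: "'a::linorder"
  assumes "\<forall>y\<in>#P. y \<le> x"
  shows "Max_mset (add_mset x P) = x"
  using assms by (intro Max_eqI) auto

lemma weighing_criterion_add_mset_above_sum: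
  assumes "weighing_criterion P" "sum_mset P \<le> x" "0 < x" "x \<le> 2 * sum_mset P + 1"
  shows "weighing_criterion (add_mset x P)"
proof -
  have "\<forall>y\<in>#P. y \<le> x"
    using assms(2) member_le_sum_mset order_trans by blast
  then show ?thesis
    using assms weighing_criterion_add_mset_Max by blast
qed

lemma weighing_criterion_add_one:
  assumes "weighing_criterion P"
  shows "weighing_criterion (add_mset 1 P)"
  unfolding weighing_criterion_def
proof
  fix z assume "z \<in># add_mset 1 P"
  moreover have "sum_mset {#y \<in># P. y < z#} \<le> sum_mset {#y \<in># add_mset 1 P. y < z#}"
    by (cases "1 < z") auto
  ultimately show "0 < z \<and> z \<le> 2 * sum_mset {#y \<in># add_mset 1 P. y < z#} + 1"
    using assms unfolding weighing_criterion_def by force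
qed

lemma weighing_criterion_remove_Max:
  assumes "weighing_criterion P" "P \<noteq> {#}"
  shows "weighing_criterion (P - {#Max_mset P#})"
    and "Max_mset P \<le> 2 * sum_mset (P - {#Max_mset P#}) + 1"
proof -
  have "P = add_mset (Max_mset P) (P - {#Max_mset P#})"
    using assms(2) by simp
  moreover have "\<forall>y\<in>#P - {#Max_mset P#}. y \<le> Max_mset P"
    by (auto dest: in_diffD)
  ultimately show "weighing_criterion (P - {#Max_mset P#})"
    and "Max_mset P \<le> 2 * sum_mset (P - {#Max_mset P#}) + 1"
    using assms(1) weighing_criterion_add_mset_Max by metis+
qed

lemma weighing_criterion_sum_bound:
  "weighing_criterion P \<Longrightarrow> 2 * sum_mset P + 1 \<le> 3 ^ size P"
proof (induction P rule: multiset_induct_max)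
  case (add x P)
  then show ?case
    using weighing_criterion_add_mset_Max by fastforce
qed simp

lemma weighing_criterion_signed_sums:
  assumes "weighing_criterion P" "l \<le> sum_mset P"
  shows "\<exists>A B. A + B \<subseteq># P \<and> int l = int (sum_mset A) - int (sum_mset B)"
  using assms
proof (induction P arbitrary: l rule: multiset_induct_max)
  case empty
  then show ?case by (intro exI[of _ "{#}"]) simp
next
  case (add x P)
  have P: "weighing_criterion P" and x: "x \<le> 2 * sum_mset P + 1"
    using add.prems(1) add.hyps weighing_criterion_add_mset_Max by blast+
  consider "l \<le> sum_mset P" | "x \<le> l" | "sum_mset P < l" "l < x"
    by linarith
  then show ?case
  proof cases
    case 1
    then obtain A B where "A + B \<subseteq># P" "int l = int (sum_mset A) - int (sum_mset B)"
      using add.IH[OF P] by blast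
    moreover have "P \<subseteq># add_mset x P"
      by simp
    ultimately show ?thesis
      by (meson subset_mset.order_trans)
  next
    case 2
    then have "l - x \<le> sum_mset P"
      using add.prems(2) by simp
    then obtain A B where "A + B \<subseteq># P" "int (l - x) = int (sum_mset A) - int (sum_mset B)"
      using add.IH[OF P] by blast
    with 2 show ?thesis
      by (intro exI[of _ "add_mset x A"] exI[of _ B]) simp
  next
    case 3
    then have "x - l \<le> sum_mset P"
      using x by simp
    then obtain A B where "A + B \<subseteq># P" "int (x - l) = int (sum_mset A) - int (sum_mset B)"
      using add.IH[OF P] by blast
    with 3 show ?thesis
      by (intro exI[of _ "add_mset x B"] exI[of _ A]) (simp add: add.commute)
  qed
qed

text \<open>If a part x exceeds 2R + 1, R the total of the parts below x, then n - 2R - 1 is not a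
  signed sum \<open>\<Sum>A - \<Sum>B\<close>: the parts B + C outside A would satisfy
  \<open>\<Sum>B + \<Sum>(B + C) = 2R + 1\<close>, which is too small if B + C contains a part \<open>\<ge> x\<close>
  and too large otherwise.\<close>
lemma weighing_partition_imp_criterion:
  assumes W: "weighing_partition n P"
  shows "weighing_criterion P"
  unfolding weighing_criterion_def
proof (intro ballI conjI)
  fix x assume xP: "x \<in># P"
  then show "0 < x"
    using W by (auto simp: weighing_partition_def)
  define R where "R = sum_mset {#y \<in># P. y < x#}"
  show "x \<le> 2 * R + 1"
  proof (rule ccontr)
    assume big: "\<not> x \<le> 2 * R + 1"
    have n: "n = sum_mset P"
      using W by (simp add: weighing_partition_def)
    have "x \<le> sum_mset {#y \<in># P. \<not> y < x#}"
      using xP by (intro member_le_sum_mset) simp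
    moreover have "n = R + sum_mset {#y \<in># P. \<not> y < x#}"
      unfolding n R_def by (metis multiset_partition sum_mset.union)
    ultimately have l: "1 \<le> n - 2 * R - 1" "n - 2 * R - 1 \<le> n"
      using big by linarith+
    then obtain A B where AB: "A + B \<subseteq># P"
      "int (n - 2 * R - 1) = int (sum_mset A) - int (sum_mset B)"
      using W unfolding weighing_partition_def by (meson atLeastAtMost_iff)
    obtain C where C: "P = A + B + C"
      using AB(1) mset_subset_eq_exists_conv by blast
    then have "n = sum_mset A + sum_mset B + sum_mset C"
      using n by simp
    then have sumBC: "sum_mset B + sum_mset (B + C) = 2 * R + 1"
      using AB(2) l(1) sum_mset.union[of B C] by linarith
    show False
    proof (cases "\<forall>y\<in>#B + C. y < x")
      case True
      have "B + C \<subseteq># P"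
        using C by simp
      then have "{#y \<in># B + C. y < x#} \<subseteq># {#y \<in># P. y < x#}"
        by (rule multiset_filter_mono)
      moreover have "{#y \<in># B + C. y < x#} = B + C"
        using True filter_mset_eq_conv[of "\<lambda>y. y < x" "B + C" "B + C"] by simp
      ultimately have "sum_mset (B + C) \<le> R"
        unfolding R_def by (metis sum_mset_mono_subset)
      then show False
        using sumBC by simp
    next
      case False
      then obtain y where "y \<in># B + C" "x \<le> y"
        using not_less by blast
      then have "x \<le> sum_mset (B + C)"
        using member_le_sum_mset order_trans by blast
      then show False
        using sumBC big by linarith
    qed
  qed
qed

lemma weighing_partition_iff_criterion:
  "weighing_partition n P \<longleftrightarrow> weighing_criterion P \<and> sum_mset P = n"
proof
  assume "weighing_partition n P"
  then show "weighing_criterion P \<and> sum_mset P = n"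
    using weighing_partition_imp_criterion by (simp add: weighing_partition_def)
next
  assume "weighing_criterion P \<and> sum_mset P = n"
  then show "weighing_partition n P"
    unfolding weighing_partition_def
    using weighing_criterion_signed_sums by (auto simp: weighing_criterion_def)
qed

lemma div_three_split:
  fixes k R :: nat
  assumes "3 ^ k + 1 \<le> 2 * R" "2 * R + 1 \<le> 3 ^ Suc k"
  defines "R' \<equiv> (R + 1) div 3"
  shows "k \<le> R'" "2 * R' + 1 \<le> 3 ^ k" "R' \<le> R - R'" "0 < R - R'" "R - R' \<le> 2 * R' + 1"
proof -
  have "odd ((3::nat) ^ k)"
    by simp
  then obtain b :: nat where b: "3 ^ k = 2 * b + 1"
    by (rule oddE)
  have k: "6 * k \<le> 2 * b + 4"
    using six_mult_le_three_power[of k] b by simp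
  have R: "b + 1 \<le> R" "R \<le> 3 * b + 1"
    using assms(1,2) b by simp_all
  have R': "R \<le> 3 * R' + 1" "3 * R' \<le> R + 1"
    unfolding R'_def by linarith+
  show "k \<le> R'"
    using k R(1) R'(1) by linarith
  show "2 * R' + 1 \<le> 3 ^ k"
    unfolding b using R(2) R'(2) by presburger
  show "R' \<le> R - R'" "0 < R - R'"
    using R(1) R'(2) by linarith+
  show "R - R' \<le> 2 * R' + 1"
    using R'(1) by linarith
qed

lemma exists_weighing_criterion:
  assumes "k \<le> R" "2 * R + 1 \<le> 3 ^ k"
  shows "\<exists>P. weighing_criterion P \<and> size P = k \<and> sum_mset P = R"
  using assms
proof (induction k arbitrary: R)
  case 0
  then show ?case
    by (intro exI[of _ "{#}"]) (simp add: weighing_criterion_def)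
next
  case (Suc k)
  show ?case
  proof (cases "2 * R \<le> 3 ^ k + 1")
    case True
    then have "k \<le> R - 1" "2 * (R - 1) + 1 \<le> 3 ^ k"
      using Suc.prems(1) by linarith+
    then obtain P where P: "weighing_criterion P" "size P = k" "sum_mset P = R - 1"
      using Suc.IH by blast
    then show ?thesis
      using Suc.prems(1) weighing_criterion_add_one
      by (intro exI[of _ "add_mset 1 P"]) auto
  next
    case False
    define R' where "R' = (R + 1) div 3"
    have split: "k \<le> R'" "2 * R' + 1 \<le> 3 ^ k" "R' \<le> R - R'" "0 < R - R'"
      "R - R' \<le> 2 * R' + 1"
      using div_three_split[of k R] False Suc.prems(2) unfolding R'_def by simp_all
    then obtain P where P: "weighing_criterion P" "size P = k" "sum_mset P = R'"
      using Suc.IH by blast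
    then show ?thesis
      using split weighing_criterion_add_mset_above_sum[OF P(1)]
      by (intro exI[of _ "add_mset (R - R') P"]) auto
  qed
qed

lemma exists_weighing_criterion_largest_Max:
  assumes "0 < m" "3 ^ (m - 1) + 1 \<le> 2 * n" "2 * n + 1 \<le> 3 ^ m"
  shows "\<exists>P. weighing_criterion P \<and> size P = m \<and> sum_mset P = n \<and>
    Max_mset P = n - (n + 1) div 3"
proof -
  obtain k where m: "m = Suc k"
    using assms(1) gr0_implies_Suc by blast
  define R' where "R' = (n + 1) div 3"
  have split: "k \<le> R'" "2 * R' + 1 \<le> 3 ^ k" "R' \<le> n - R'" "0 < n - R'"
    "n - R' \<le> 2 * R' + 1"
    using div_three_split[of k n] assms(2,3) unfolding m R'_def by simp_all
  then obtain P where P: "weighing_criterion P" "size P = k" "sum_mset P = R'"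
    using exists_weighing_criterion by blast
  have "\<forall>y\<in>#P. y \<le> n - R'"
    using P(3) split(3) member_le_sum_mset order_trans by blast
  then show ?thesis
    using split P m weighing_criterion_add_mset_above_sum[OF P(1)] Max_mset_add_mset_upper
    by (intro exI[of _ "add_mset (n - R') P"]) (auto simp: R'_def)
qed

lemma feasible_partition_iff:
  assumes "0 < m" "3 ^ (m - 1) + 1 \<le> 2 * n" "2 * n + 1 \<le> 3 ^ m"
  shows "feasible_partition n P \<longleftrightarrow> weighing_partition n P \<and> size P = m"
proof -
  have parts_ge: "m \<le> size Q" if "weighing_partition n Q" for Q
  proof (rule ccontr)
    assume "\<not> m \<le> size Q"
    then have "(3::nat) ^ size Q \<le> 3 ^ (m - 1)"
      by (intro power_increasing) auto
    moreover have "2 * n + 1 \<le> 3 ^ size Q"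
      using that weighing_criterion_sum_bound by (auto simp: weighing_partition_iff_criterion)
    ultimately show False
      using assms(2) by linarith
  qed
  obtain P0 where "weighing_partition n P0" "size P0 = m"
    using exists_weighing_criterion_largest_Max[OF assms] weighing_partition_iff_criterion by blast
  then show ?thesis
    using parts_ge unfolding feasible_partition_def by (metis le_antisym)
qed

lemma weighing_partition_R_last_bounds:
  assumes "weighing_partition n P" "0 < n"
  shows "n \<le> 3 * R_last n P + 1"
    and "2 * R_last n P + 1 \<le> 3 ^ (size P - 1)"
    and "2 \<le> size P \<Longrightarrow> 4 * R_last n P + 1 \<le> 2 * n + 3 ^ (size P - 2)"
proof -
  have P: "weighing_criterion P" "sum_mset P = n"
    using assms(1) weighing_partition_iff_criterion by auto
  then have "P \<noteq> {#}"
    using assms(2) by auto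
  define P' where "P' = P - {#Max_mset P#}"
  have P_eq: "P = add_mset (Max_mset P) P'"
    using \<open>P \<noteq> {#}\<close> by (simp add: P'_def)
  have P': "weighing_criterion P'" "Max_mset P \<le> 2 * sum_mset P' + 1"
    using weighing_criterion_remove_Max[OF P(1) \<open>P \<noteq> {#}\<close>, folded P'_def] by simp_all
  have size_P: "size P = Suc (size P')"
    using arg_cong[OF P_eq, of size] by simp
  have n: "n = Max_mset P + sum_mset P'"
    using arg_cong[OF P_eq, of sum_mset] P(2) by simp
  then have R: "R_last n P = sum_mset P'"
    by (simp add: R_last_def)
  show "n \<le> 3 * R_last n P + 1"
    using R n P'(2) by linarith
  show "2 * R_last n P + 1 \<le> 3 ^ (size P - 1)"
    using weighing_criterion_sum_bound[OF P'(1)] R size_P by simp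
  assume "2 \<le> size P"
  then have "P' \<noteq> {#}"
    using size_P by auto
  define P'' where "P'' = P' - {#Max_mset P'#}"
  have P'_eq: "P' = add_mset (Max_mset P') P''"
    using \<open>P' \<noteq> {#}\<close> by (simp add: P''_def)
  have "Max_mset P' \<in># P"
    using \<open>P' \<noteq> {#}\<close> unfolding P'_def by (meson Max_in finite_set_mset in_diffD set_mset_eq_empty_iff)
  then have "Max_mset P' \<le> Max_mset P"
    by simp
  moreover have "2 * sum_mset P'' + 1 \<le> 3 ^ (size P - 2)"
    using weighing_criterion_sum_bound weighing_criterion_remove_Max(1)[OF P'(1) \<open>P' \<noteq> {#}\<close>]
      arg_cong[OF P'_eq, of size] size_P unfolding P''_def by simp
  moreover have "sum_mset P' = Max_mset P' + sum_mset P''"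
    using arg_cong[OF P'_eq, of sum_mset] by simp
  ultimately show "4 * R_last n P + 1 \<le> 2 * n + 3 ^ (size P - 2)"
    using R n by linarith
qed

lemma three_powers_odd_decomp:
  fixes m :: nat
  assumes "2 \<le> m"
  obtains a :: nat where "3 ^ (m - 2) = 2 * a + 1" "3 ^ (m - 1) = 6 * a + 3" "3 ^ m = 18 * a + 9"
proof -
  have "odd ((3::nat) ^ (m - 2))"
    by simp
  then obtain a :: nat where a: "3 ^ (m - 2) = 2 * a + 1"
    by (rule oddE)
  obtain j where "m = Suc (Suc j)"
    using assms by (metis add_2_eq_Suc le_Suc_ex)
  then show ?thesis
    using a that by simp
qed

text \<open>The two largest parts x = n - R \<ge> y = R - a are put on top of m - 2 parts summing to
  a = (3^{m-2} - 1)/2.\<close>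
lemma exists_feasible_R_last:
  assumes m: "2 \<le> m" and n: "3 ^ (m - 1) + 1 \<le> 2 * n" "2 * n + 1 \<le> 3 ^ m"
    and R: "n \<le> 3 * R + 1" "2 * R + 1 \<le> 3 ^ (m - 1)" "4 * R + 1 \<le> 2 * n + 3 ^ (m - 2)"
      "3 ^ (m - 2) \<le> R + 1"
  shows "\<exists>P. feasible_partition n P \<and> R_last n P = R"
proof -
  obtain a :: nat where a: "3 ^ (m - 2) = 2 * a + 1" "3 ^ (m - 1) = 6 * a + 3"
    "3 ^ m = 18 * a + 9"
    using three_powers_odd_decomp[OF m] by blast
  have "6 * (m - 2) \<le> 2 * a + 4"
    using six_mult_le_three_power[of "m - 2"] a(1) by simp
  then have "m - 2 \<le> a"
    by linarith
  then obtain P where P: "weighing_criterion P" "size P = m - 2" "sum_mset P = a"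
    using exists_weighing_criterion[of "m - 2" a] a(1) by auto
  define y where "y = R - a"
  define x where "x = n - R"
  have "6 * a + 4 \<le> 2 * n" "2 * R + 1 \<le> 6 * a + 3" "4 * R + 1 \<le> 2 * n + 2 * a + 1"
    "2 * a \<le> R"
    using n(1) R(2-4) unfolding a by simp_all
  then have y: "a \<le> y" "0 < y" "y \<le> 2 * a + 1" and x: "y \<le> x" "x \<le> 2 * (a + y) + 1"
    and sums: "R = a + y" "n = R + x"
    using R(1) unfolding x_def y_def by simp_all
  have Py: "weighing_criterion (add_mset y P)"
    using weighing_criterion_add_mset_above_sum[OF P(1)] y P(3) by simp
  have below_x: "\<forall>z\<in>#add_mset y P. z \<le> x"
    using P(3) y(1) x(1) member_le_sum_mset order_trans by fastforce
  have "weighing_criterion (add_mset x (add_mset y P))"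
    using weighing_criterion_add_mset_Max[OF below_x] Py x y P(3) by simp
  moreover have "Max_mset (add_mset x (add_mset y P)) = x"
    using Max_mset_add_mset_upper[OF below_x] .
  ultimately show ?thesis
    using P sums m feasible_partition_iff[of m n] n weighing_partition_iff_criterion
    by (intro exI[of _ "add_mset x (add_mset y P)"]) (simp add: R_last_def)
qed

text \<open>The smaller of the two upper bounds; cases (a) and (b) of the theorem say which one is
  active. For m = 1 both vanish (here m - 2 = 0 in nat, unlike \<open>int m - 2\<close> in the theorem).\<close>
definition R_last_max :: "nat \<Rightarrow> nat \<Rightarrow> nat" where
  "R_last_max m n = min ((2 * n + 3 ^ (m - 2) - 1) div 4) ((3 ^ (m - 1) - 1) div 2)"

lemma R_last_range:
  assumes m: "0 < m" and n: "3 ^ (m - 1) + 1 \<le> 2 * n" "2 * n + 1 \<le> 3 ^ m"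
  shows "feasible_partition n P \<Longrightarrow>
      (n + 1) div 3 \<le> R_last n P \<and> R_last n P \<le> R_last_max m n"
    and "\<exists>P. feasible_partition n P \<and> R_last n P = (n + 1) div 3"
    and "\<exists>P. feasible_partition n P \<and> R_last n P = R_last_max m n"
proof -
  have "0 < n"
    using n(1) by simp
  note feasible = feasible_partition_iff[OF m n]
  show min: "\<exists>P. feasible_partition n P \<and> R_last n P = (n + 1) div 3"
  proof -
    obtain P where P: "weighing_criterion P" "size P = m" "sum_mset P = n"
      "Max_mset P = n - (n + 1) div 3"
      using exists_weighing_criterion_largest_Max[OF m n] by blast
    then have "feasible_partition n P"
      using feasible weighing_partition_iff_criterion by simp
    moreover have "R_last n P = (n + 1) div 3"
      using P(4) by (simp add: R_last_def)
    ultimately show ?thesis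
      by blast
  qed
  show "(n + 1) div 3 \<le> R_last n P \<and> R_last n P \<le> R_last_max m n"
    if "feasible_partition n P"
  proof -
    have W: "weighing_partition n P" "size P = m"
      using that feasible by simp_all
    have "4 * R_last n P + 1 \<le> 2 * n + 3 ^ (m - 2)"
    proof (cases "m = 1")
      case True
      then show ?thesis
        using weighing_partition_R_last_bounds(2)[OF W(1) \<open>0 < n\<close>] W(2) by simp
    next
      case False
      then show ?thesis
        using weighing_partition_R_last_bounds(3)[OF W(1) \<open>0 < n\<close>] W(2) m by simp
    qed
    moreover have "2 * R_last n P + 1 \<le> 3 ^ (m - 1)"
      using weighing_partition_R_last_bounds(2)[OF W(1) \<open>0 < n\<close>] W(2) by simp
    moreover have "(n + 1) div 3 < R_last n P + 1"
      using weighing_partition_R_last_bounds(1)[OF W(1) \<open>0 < n\<close>]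
      by (simp add: div_less_iff_less_mult)
    ultimately show ?thesis
      unfolding R_last_max_def by (simp add: less_eq_div_iff_mult_less_eq) linarith
  qed
  show "\<exists>P. feasible_partition n P \<and> R_last n P = R_last_max m n"
  proof (cases "m = 1")
    case True
    then have "n = 1"
      using n by simp
    then have "R_last_max m n = (n + 1) div 3"
      using True by (simp add: R_last_max_def)
    then show ?thesis
      using min by simp
  next
    case False
    then have "2 \<le> m"
      using m by simp
    then obtain a :: nat where
      a: "3 ^ (m - 2) = 2 * a + 1" "3 ^ (m - 1) = 6 * a + 3" "3 ^ m = 18 * a + 9"
      by (rule three_powers_odd_decomp)
    define q where "q = (n + a) div 2"
    have q: "2 * q \<le> n + a" "n + a \<le> 2 * q + 1"
      using div_mult_mod_eq[of "n + a" 2] mod_less_divisor[of 2 "n + a"]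
      unfolding q_def by linarith+
    have "(2 * n + 3 ^ (m - 2) - 1) div 4 = q"
      unfolding a q_def by (simp add: div_mult2_eq[symmetric])
    then have max: "R_last_max m n = min q (3 * a + 1)"
      unfolding R_last_max_def a by simp
    show ?thesis
      unfolding max
      by (rule exists_feasible_R_last[OF \<open>2 \<le> m\<close> n, unfolded a])
        (use n[unfolded a] q in \<open>auto simp: min_def\<close>)
  qed
qed

lemma of_int_ceiling_pred_div_three: "of_int \<lceil>(real n - 1) / 3\<rceil> = real ((n + 1) div 3)"
proof -
  have "(real n - 1) / 3 = of_int (int n - 1) / of_int 3"
    by simp
  then have "\<lceil>(real n - 1) / 3\<rceil> = - ((1 - int n) div 3)"
    by (simp only: ceiling_divide_eq_div)
  also have "\<dots> = int ((n + 1) div 3)"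
    by presburger
  finally show ?thesis
    by simp
qed

lemma three_powi_pred_pred:
  fixes m :: nat
  assumes "2 \<le> m"
  shows "(3::real) powi (int m - 2) = real (3 ^ (m - 2))"
proof -
  obtain j where "m = Suc (Suc j)"
    using assms by (metis add_2_eq_Suc le_Suc_ex)
  then show ?thesis
    by simp
qed

lemma of_int_floor_eq_R_last_max:
  assumes m: "0 < m" and n: "3 ^ (m - 1) + 1 \<le> 2 * n" "2 * n + 1 \<le> 3 ^ m"
    and small: "real n \<le> ((3::real) ^ (m - 1) + 1) / 2 + (3::real) powi (int m - 2)"
  shows "of_int \<lfloor>(2 * real n + (3::real) powi (int m - 2) - 1) / 4\<rfloor> = real (R_last_max m n)"
proof (cases "m = 1")
  case True
  then have "n = 1"
    using n by simp
  moreover have "(3::real) powi (int m - 2) = 1 / 3"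
    using True by (simp add: power_int_minus_divide)
  moreover have "\<lfloor>(1::real) / 3\<rfloor> = 0"
    by (simp add: floor_unique)
  ultimately show ?thesis
    using True by (simp add: R_last_max_def)
next
  case False
  then have "2 \<le> m"
    using m by simp
  then obtain a :: nat where a: "3 ^ (m - 2) = 2 * a + 1" "3 ^ (m - 1) = 6 * a + 3"
    by (rule three_powers_odd_decomp)
  have powi: "(3::real) powi (int m - 2) = 2 * real a + 1"
    using three_powi_pred_pred[OF \<open>2 \<le> m\<close>] a(1) by simp
  have pow: "(3::real) ^ (m - 1) = 6 * real a + 3"
    using arg_cong[OF a(2), of real] by simp
  have "real n \<le> real (5 * a + 3)"
    using small unfolding powi pow by (simp add: field_simps)
  then have "n + a \<le> 6 * a + 3"
    by (simp only: of_nat_le_iff)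
  then have "(n + a) div 2 \<le> (6 * a + 3) div 2"
    by (rule div_le_mono)
  then have "(n + a) div 2 \<le> 3 * a + 1"
    by simp
  moreover have "(2 * n + 2 * a) div 4 = (n + a) div 2"
    by (simp add: div_mult2_eq[symmetric])
  moreover have "(2 * real n + (2 * real a + 1) - 1) / 4 = real (2 * n + 2 * a) / real (4::nat)"
    by simp
  ultimately show ?thesis
    unfolding powi R_last_max_def a by (simp only: floor_divide_of_nat_eq) simp
qed

lemma R_last_max_eq_half:
  assumes m: "0 < m" and n: "3 ^ (m - 1) + 1 \<le> 2 * n" "2 * n + 1 \<le> 3 ^ m"
    and large: "((3::real) ^ (m - 1) + 1) / 2 + (3::real) powi (int m - 2) + 1 \<le> real n"
  shows "((3::real) ^ (m - 1) - 1) / 2 = real (R_last_max m n)"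
proof (cases "m = 1")
  case True
  then have "n = 1" "(3::real) powi (int m - 2) = 1 / 3"
    using n by (simp_all add: power_int_minus_divide)
  then show ?thesis
    using True large by simp
next
  case False
  then have "2 \<le> m"
    using m by simp
  then obtain a :: nat where a: "3 ^ (m - 2) = 2 * a + 1" "3 ^ (m - 1) = 6 * a + 3"
    by (rule three_powers_odd_decomp)
  have powi: "(3::real) powi (int m - 2) = 2 * real a + 1"
    using three_powi_pred_pred[OF \<open>2 \<le> m\<close>] a(1) by simp
  have pow: "(3::real) ^ (m - 1) = 6 * real a + 3"
    using arg_cong[OF a(2), of real] by simp
  have "real (5 * a + 4) \<le> real n"
    using large unfolding powi pow by (simp add: field_simps)
  then have "5 * a + 4 \<le> n"
    by (simp only: of_nat_le_iff)
  then have "3 * a + 1 \<le> (2 * n + 2 * a) div 4"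
    by (simp add: less_eq_div_iff_mult_less_eq)
  then show ?thesis
    unfolding R_last_max_def a pow by simp
qed

theorem theorem5:
  fixes m n :: nat
  assumes m: "0 < m"
    and lo: "((3::real) ^ (m - 1) + 1) / 2 \<le> real n"
    and hi: "real n \<le> ((3::real) ^ m - 1) / 2"
  shows "(real n \<le> ((3::real) ^ (m - 1) + 1) / 2 + (3::real) powi (int m - 2) \<longrightarrow>
           (\<forall>P. feasible_partition n P \<longrightarrow>
               real (R_last n P) \<ge> of_int \<lceil>(real n - 1) / 3\<rceil> \<and>
               real (R_last n P) \<le> of_int \<lfloor>(2 * real n + (3::real) powi (int m - 2) - 1) / 4\<rfloor>) \<and>
           (\<exists>P. feasible_partition n P \<and>
               real (R_last n P) = of_int \<lceil>(real n - 1) / 3\<rceil>) \<and>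
           (\<exists>P. feasible_partition n P \<and>
               real (R_last n P) = of_int \<lfloor>(2 * real n + (3::real) powi (int m - 2) - 1) / 4\<rfloor>))
       \<and> (((3::real) ^ (m - 1) + 1) / 2 + (3::real) powi (int m - 2) + 1 \<le> real n \<longrightarrow>
           (\<forall>P. feasible_partition n P \<longrightarrow>
               real (R_last n P) \<ge> of_int \<lceil>(real n - 1) / 3\<rceil> \<and>
               real (R_last n P) \<le> ((3::real) ^ (m - 1) - 1) / 2) \<and>
           (\<exists>P. feasible_partition n P \<and>
               real (R_last n P) = of_int \<lceil>(real n - 1) / 3\<rceil>) \<and>
           (\<exists>P. feasible_partition n P \<and>
               real (R_last n P) = ((3::real) ^ (m - 1) - 1) / 2))"
proof -
  have "real (3 ^ (m - 1) + 1) \<le> real (2 * n)" "real (2 * n + 1) \<le> real (3 ^ m)"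
    using lo hi by simp_all
  then have n: "3 ^ (m - 1) + 1 \<le> 2 * n" "2 * n + 1 \<le> 3 ^ m"
    by (simp_all only: of_nat_le_iff)
  note range = R_last_range[OF m n]
  show ?thesis
    unfolding of_int_ceiling_pred_div_three
  proof (intro conjI impI)
    assume "real n \<le> ((3::real) ^ (m - 1) + 1) / 2 + (3::real) powi (int m - 2)"
    note max = of_int_floor_eq_R_last_max[OF m n this]
    show "\<forall>P. feasible_partition n P \<longrightarrow> real ((n + 1) div 3) \<le> real (R_last n P) \<and>
        real (R_last n P) \<le> of_int \<lfloor>(2 * real n + (3::real) powi (int m - 2) - 1) / 4\<rfloor>"
      unfolding max using range(1) by simp
    show "\<exists>P. feasible_partition n P \<and>
        real (R_last n P) = of_int \<lfloor>(2 * real n + (3::real) powi (int m - 2) - 1) / 4\<rfloor>"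
      unfolding max using range(3) by simp
  next
    assume "((3::real) ^ (m - 1) + 1) / 2 + (3::real) powi (int m - 2) + 1 \<le> real n"
    note max = R_last_max_eq_half[OF m n this]
    show "\<forall>P. feasible_partition n P \<longrightarrow> real ((n + 1) div 3) \<le> real (R_last n P) \<and>
        real (R_last n P) \<le> ((3::real) ^ (m - 1) - 1) / 2"
      unfolding max using range(1) by simp
    show "\<exists>P. feasible_partition n P \<and> real (R_last n P) = ((3::real) ^ (m - 1) - 1) / 2"
      unfolding max using range(3) by simp
  qed (use range(2) in simp)+
qed

end
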